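(* Let $\alpha>-1$, $j\in\mathbb{N}\cup\{0\}$, $M>0$. Let $\{c_n^{(\alpha)}\}_{n\ge0}$ be the orthonormal Gegenbauer polynomials with respect to $(1-x^2)^\alpha$ on $(-1,1)$, let $\lambda_n=n^2+n(2\alpha+1)$, $K_n^{(j,j)}(0,0)=\sum_{i=0}^n\big((c_i^{(\alpha)})^{(j)}(0)\big)^2$, and for $n\ge1$ define $$\widetilde\lambda_{j+2n}=\lambda_{j+2n}+M\sum_{i=1}^n(\lambda_{j+2i}-\lambda_{j+2i-2})K_{j+2i-1}^{(j,j)}(0,0).$$ Then: if $j=2r$, $$\lim_{n\to+\infty}\frac{\widetilde\lambda_{2r+2n}}{n^{4r+3}}=\frac{2^{4(r+1)}M}{\pi(4r+3)(4r+1)};$$ if $j=2r+1$, $$\lim_{n\to+\infty}\frac{\widetilde\lambda_{2r+1+2n}}{n^{4r+5}}=\frac{2^{4r+6}M}{\pi(4r+5)(4r+3)}.$$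
   Context: Background: $\lambda_n$ are the eigenvalues of the Gegenbauer equation $(x^2-1)y''+2(\alpha+1)xy'=n(n+2\alpha+1)y$, and $\widetilde\lambda_{j+2n}$ are eigenvalues of the differential operator $\mathbf{L}$ having as eigenfunctions the polynomials orthonormal with respect to $(f,g)=\int_{-1}^1 fg(1-x^2)^\alpha dx+Mf^{(j)}(0)g^{(j)}(0)$. *)

theory Defs
  imports "HOL-Analysis.Analysis" "HOL-Computational_Algebra.Polynomial"
begin

definition geg_weight :: "real \<Rightarrow> real \<Rightarrow> real" where
  "geg_weight \<alpha> x = (1 - x^2) powr \<alpha>"

definition orthonormal_gegenbauer :: "real \<Rightarrow> (nat \<Rightarrow> real poly) \<Rightarrow> bool" where
  "orthonormal_gegenbauer \<alpha> c \<longleftrightarrow>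
     (\<forall>n. degree (c n) = n \<and> lead_coeff (c n) > 0) \<and>
     (\<forall>n m. set_integrable lborel {-1<..<1::real}
                (\<lambda>x. poly (c n) x * poly (c m) x * geg_weight \<alpha> x) \<and>
            (\<integral>x\<in>{-1<..<1::real}. poly (c n) x * poly (c m) x * geg_weight \<alpha> x \<partial>lborel)
              = (if n = m then 1 else 0))"

definition geg_lambda :: "real \<Rightarrow> nat \<Rightarrow> real" where
  "geg_lambda \<alpha> n = real n ^ 2 + real n * (2 * \<alpha> + 1)"

definition kernelK :: "(nat \<Rightarrow> real poly) \<Rightarrow> nat \<Rightarrow> nat \<Rightarrow> real" where
  "kernelK c j n = (\<Sum>i=0..n. (poly ((pderiv ^^ j) (c i)) 0) ^ 2)"

text \<open>lambda-tilde_{j+2n}, written as a function of n.\<close>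
definition lambda_tilde :: "real \<Rightarrow> real \<Rightarrow> (nat \<Rightarrow> real poly) \<Rightarrow> nat \<Rightarrow> nat \<Rightarrow> real" where
  "lambda_tilde \<alpha> M c j n = geg_lambda \<alpha> (j + 2*n)
     + M * (\<Sum>i=1..n. (geg_lambda \<alpha> (j + 2*i) - geg_lambda \<alpha> (j + 2*i - 2))
                        * kernelK c j (j + 2*i - 1))"

end

theory Submission
  imports Defs "HOL-Real_Asymp.Real_Asymp"
begin

text \<open>
  Integrals of polynomials against \<open>(1 - x\<^sup>2)\<^sup>\<alpha>\<close> are combinations of the moments of the
  weight, which are Beta values. Integration by parts, carried out on the moments, shows that the
  Gegenbauer operator is symmetric, so the orthonormal polynomials \<open>c\<^sub>m\<close> are its eigenfunctions
  and their coefficients obey a two-term recurrence. Hence the \<open>j\<close>-th derivative of \<open>c\<^sub>m\<close> at 0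
  vanishes unless \<open>m - j\<close> is even, and for \<open>m = j + 2i\<close> its square is a ratio of factorials and
  Pochhammer symbols divided by the norm of the monic orthogonal polynomial of degree \<open>m\<close>; that
  norm is found by induction on the degree, because the derivative of a monic orthogonal
  polynomial is monic orthogonal for the exponent \<open>\<alpha> + 1\<close>. Legendre's duplication formula and
  \<open>\<Gamma>(i + 1 + z) \<sim> i! i^z\<close> show that this square grows like \<open>(2 4^j / \<pi>) i^(2j)\<close>, and two
  applications of the Stolz-Cesaro theorem give
  \<open>lambda_tilde n \<sim> 2^(2j + 4) M n^(2j + 3) / (\<pi> (2j + 1) (2j + 3))\<close>, which is the claim for
  both parities of \<open>j\<close>.
\<close>

section \<open>Moments of the Gegenbauer weight\<close>

lemma pos_not_in_nonpos_Ints: "(x::real) > 0 \<Longrightarrow> x \<notin> \<int>\<^sub>\<le>\<^sub>0"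
  by (auto dest: nonpos_Ints_nonpos)

text \<open>The moment \<open>\<integral>\<^sub>-\<^sub>1\<^sup>1 x\<^sup>k (1 - x\<^sup>2)\<^sup>a dx\<close>; the substitution \<open>t = x\<^sup>2\<close> turns it into
  a Beta integral.\<close>
definition geg_moment :: "real \<Rightarrow> nat \<Rightarrow> real" where
  "geg_moment a k = (if even k then Beta (real (k div 2) + 1/2) (a + 1) else 0)"

lemma geg_moment_Suc_Suc: "(real k + 2*a + 3) * geg_moment a (k + 2) = (real k + 1) * geg_moment a k"
proof (cases "even k")
  case True
  have "(real (k div 2) + 1/2 + (a + 1)) * Beta (real (k div 2) + 1/2 + 1) (a + 1)
          = (real (k div 2) + 1/2) * Beta (real (k div 2) + 1/2) (a + 1)"
    by (intro Beta_plus1_left pos_not_in_nonpos_Ints) simp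
  with True show ?thesis
    by (auto simp: geg_moment_def algebra_simps elim!: evenE)
qed (simp add: geg_moment_def)

lemma geg_moment_plus1:
  assumes "a > -1"
  shows "geg_moment (a + 1) k = geg_moment a k - geg_moment a (k + 2)"
proof (cases "even k")
  case True
  define x where "x = real (k div 2) + 1/2"
  have "x > 0" "x + (a + 1) > 0" using assms by (auto simp: x_def)
  have "(x + (a + 1)) * Beta (x + 1) (a + 1) = x * Beta x (a + 1)"
    using \<open>x > 0\<close> by (intro Beta_plus1_left pos_not_in_nonpos_Ints)
  moreover have "(x + (a + 1)) * Beta x (a + 1 + 1) = (a + 1) * Beta x (a + 1)"
    using assms by (intro Beta_plus1_right pos_not_in_nonpos_Ints) simp
  ultimately have "(x + (a + 1)) * Beta x (a + 1 + 1) = (x + (a + 1)) * (Beta x (a + 1) - Beta (x + 1) (a + 1))"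
    by (simp add: algebra_simps)
  with \<open>x + (a + 1) > 0\<close> have "Beta x (a + 1 + 1) = Beta x (a + 1) - Beta (x + 1) (a + 1)"
    by simp
  with True show ?thesis
    by (auto simp: geg_moment_def x_def algebra_simps elim!: evenE)
qed (simp add: geg_moment_def)

definition geg_integral :: "real \<Rightarrow> real poly \<Rightarrow> real" where
  "geg_integral a p = (\<Sum>i\<le>degree p. coeff p i * geg_moment a i)"

lemma geg_integral_bound:
  assumes "degree p \<le> N"
  shows "geg_integral a p = (\<Sum>i\<le>N. coeff p i * geg_moment a i)"
  unfolding geg_integral_def
  by (rule sum.mono_neutral_left) (use assms in \<open>auto simp: coeff_eq_0\<close>)

lemma geg_integral_add [simp]: "geg_integral a (p + q) = geg_integral a p + geg_integral a q"
proof -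
  have "degree (p + q) \<le> max (degree p) (degree q)" by (rule degree_add_le) auto
  then show ?thesis
    by (simp add: geg_integral_bound[of _ "max (degree p) (degree q)"] algebra_simps sum.distrib)
qed

lemma geg_integral_smult [simp]: "geg_integral a (smult c p) = c * geg_integral a p"
  by (simp add: geg_integral_bound[of _ "degree p"] sum_distrib_left mult_ac)

lemma geg_integral_minus [simp]: "geg_integral a (- p) = - geg_integral a p"
  using geg_integral_smult[of a "-1" p] by simp

lemma geg_integral_diff [simp]: "geg_integral a (p - q) = geg_integral a p - geg_integral a q"
  using geg_integral_add[of a p "-q"] by simp

lemma geg_integral_0 [simp]: "geg_integral a 0 = 0"
  by (simp add: geg_integral_def)

lemma geg_integral_sum: "geg_integral a (\<Sum>i\<in>A. f i) = (\<Sum>i\<in>A. geg_integral a (f i))"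
  by (induction A rule: infinite_finite_induct) simp_all

lemma geg_integral_monom [simp]: "geg_integral a (monom c k) = c * geg_moment a k"
  by (simp add: geg_integral_bound[of _ k] degree_monom_le sum.remove[of _ k])

lemma linear_functional_poly_eqI:
  fixes F G :: "real poly \<Rightarrow> real"
  assumes F: "\<And>p q. F (p + q) = F p + F q" "\<And>c p. F (smult c p) = c * F p"
    and G: "\<And>p q. G (p + q) = G p + G q" "\<And>c p. G (smult c p) = c * G p"
    and monom: "\<And>k. F (monom 1 k) = G (monom 1 k)"
  shows "F p = G p"
proof -
  have sum: "H (\<Sum>i\<in>A. f i) = (\<Sum>i\<in>A. H (f i))"
    if "\<And>p q. H (p + q) = H p + H q" for H :: "real poly \<Rightarrow> real" and f and A :: "nat set"
  proof -
    have "H 0 = 0" using that[of 0 0] by simp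
    then show ?thesis by (induction A rule: infinite_finite_induct) (simp_all add: that)
  qed
  have p: "p = (\<Sum>i\<le>degree p. smult (coeff p i) (monom 1 i))"
    by (simp add: smult_monom poly_as_sum_of_monoms)
  have "F p = (\<Sum>i\<le>degree p. coeff p i * F (monom 1 i))"
    by (subst p) (simp add: sum[of F, OF F(1)] F(2))
  also have "\<dots> = (\<Sum>i\<le>degree p. coeff p i * G (monom 1 i))"
    by (simp add: monom)
  also have "\<dots> = G p"
    by (subst (2) p) (simp add: sum[of G, OF G(1)] G(2))
  finally show ?thesis .
qed

lemma geg_integral_plus1:
  assumes "a > -1"
  shows "geg_integral (a + 1) p = geg_integral a ([:1, 0, -1:] * p)"
proof (rule linear_functional_poly_eqI[where G = "\<lambda>p. geg_integral a ([:1, 0, -1:] * p)"])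
  fix k
  have "[:1, 0, -1:] * monom 1 k = monom 1 k - monom (1::real) (k + 2)"
    by (simp add: monom_Suc algebra_simps)
  then show "geg_integral (a + 1) (monom 1 k) = geg_integral a ([:1, 0, -1:] * monom 1 k)"
    by (simp add: geg_moment_plus1[OF assms])
qed (simp_all add: ring_distribs del: mult_pCons_left)

text \<open>Integration by parts, without boundary terms because \<open>(1 - x\<^sup>2)\<^sup>a\<^sup>+\<^sup>1\<close> vanishes
  at \<open>\<plusminus>1\<close>.\<close>
lemma geg_integral_pderiv:
  assumes "a > -1"
  shows "geg_integral (a + 1) (pderiv p) = 2 * (a + 1) * geg_integral a ([:0, 1:] * p)"
proof (rule linear_functional_poly_eqI[where F = "\<lambda>p. geg_integral (a + 1) (pderiv p)"])
  fix k
  show "geg_integral (a + 1) (pderiv (monom 1 k)) = 2 * (a + 1) * geg_integral a ([:0, 1:] * monom 1 k)"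
  proof (cases k)
    case 0
    have "[:0, 1:] = monom (1::real) 1" by (simp add: monom_altdef)
    with 0 show ?thesis by (simp add: pderiv_monom geg_moment_def)
  next
    case (Suc s)
    have "(real s + 1) * geg_moment (a + 1) s = (real s + 1) * (geg_moment a s - geg_moment a (s + 2))"
      by (simp only: geg_moment_plus1[OF assms])
    also have "\<dots> = 2 * (a + 1) * geg_moment a (s + 2)"
      using geg_moment_Suc_Suc[of s a] by (simp add: algebra_simps)
    finally have "(real s + 1) * geg_moment (a + 1) s = 2 * (a + 1) * geg_moment a (s + 2)" .
    then show ?thesis using Suc by (simp add: pderiv_monom monom_Suc[symmetric] add_ac)
  qed
qed (simp_all add: pderiv_add pderiv_smult ring_distribs del: mult_pCons_left)

definition geg_op :: "real \<Rightarrow> real poly \<Rightarrow> real poly" where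
  "geg_op a p = [:-1, 0, 1:] * pderiv (pderiv p) + smult (2 * (a + 1)) ([:0, 1:] * pderiv p)"

lemma geg_integral_geg_op_mult:
  assumes "a > -1"
  shows "geg_integral a (geg_op a p * q) = geg_integral (a + 1) (pderiv p * pderiv q)"
proof -
  have "geg_op a p * q
      = smult (2 * (a + 1)) ([:0, 1:] * (pderiv p * q)) - [:1, 0, -1:] * (pderiv (pderiv p) * q)"
    by (simp add: geg_op_def algebra_simps)
  then have "geg_integral a (geg_op a p * q)
      = 2 * (a + 1) * geg_integral a ([:0, 1:] * (pderiv p * q))
        - geg_integral a ([:1, 0, -1:] * (pderiv (pderiv p) * q))"
    by (simp only: geg_integral_diff geg_integral_smult)
  also have "\<dots> = geg_integral (a + 1) (pderiv (pderiv p * q)) - geg_integral (a + 1) (pderiv (pderiv p) * q)"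
    by (simp only: geg_integral_pderiv[OF assms] geg_integral_plus1[OF assms, of "pderiv (pderiv p) * q"])
  also have "\<dots> = geg_integral (a + 1) (pderiv p * pderiv q)"
    by (simp add: pderiv_mult algebra_simps)
  finally show ?thesis .
qed

lemma geg_lambda_eq: "geg_lambda a k = real k * (real k - 1) + 2 * (a + 1) * real k"
  by (simp add: geg_lambda_def power2_eq_square algebra_simps)

lemma coeff_geg_op:
  "coeff (geg_op a p) k = geg_lambda a k * coeff p k - (real k + 2) * (real k + 1) * coeff p (k + 2)"
proof (cases k)
  case (Suc m)
  then show ?thesis by (cases m) (auto simp: geg_op_def geg_lambda_eq coeff_pderiv algebra_simps)
qed (simp add: geg_op_def geg_lambda_eq coeff_pderiv)

lemma geg_lambda_diff:
  "geg_lambda a n - geg_lambda a k = (real n - real k) * (real n + real k + 2*a + 1)"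
  by (simp add: geg_lambda_def power2_eq_square algebra_simps)

lemma geg_lambda_step:
  assumes "i \<ge> 1"
  shows "geg_lambda a (j + 2*i) - geg_lambda a (j + 2*i - 2) = 8 * real i + (4 * real j + 4 * a - 2)"
  using assms by (simp add: geg_lambda_def of_nat_diff power2_eq_square algebra_simps)

lemma geg_lambda_div_power_LIMSEQ: "(\<lambda>n. geg_lambda a (j + 2*n) / real n ^ (2*j + 3)) \<longlonglongrightarrow> 0"
proof -
  have "(\<lambda>n. geg_lambda a (j + 2*n) / real n ^ 3 * (1 / real n) ^ (2*j)) \<longlonglongrightarrow> 0 * 0 ^ (2*j)"
    by (intro tendsto_intros lim_1_over_n) (unfold geg_lambda_def; real_asymp)
  moreover have "eventually (\<lambda>n. geg_lambda a (j + 2*n) / real n ^ 3 * (1 / real n) ^ (2*j)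
      = geg_lambda a (j + 2*n) / real n ^ (2*j + 3)) sequentially"
    using eventually_gt_at_top[of "0::nat"]
    by eventually_elim (simp add: power_add power_one_over)
  ultimately show ?thesis
    by (simp add: Lim_transform_eventually)
qed

section \<open>The moment functional as a Lebesgue integral\<close>

lemma geg_weight_measurable [measurable]: "geg_weight a \<in> borel_measurable borel"
  unfolding geg_weight_def by measurable

lemma geg_weight_nonneg: "geg_weight a x \<ge> 0"
  by (simp add: geg_weight_def)

lemma geg_weight_minus [simp]: "geg_weight a (- x) = geg_weight a x"
  by (simp add: geg_weight_def)

lemma set_integrable_power_geg_weight:
  assumes "set_integrable lborel {-1<..<1::real} (geg_weight a)"
  shows "set_integrable lborel {-1<..<1::real} (\<lambda>x. x ^ k * geg_weight a x)"
  unfolding set_integrable_def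
proof (rule Bochner_Integration.integrable_bound)
  show "integrable lborel (\<lambda>x. indicator {-1<..<1::real} x *\<^sub>R geg_weight a x)"
    using assms unfolding set_integrable_def .
  have "\<bar>x ^ k * geg_weight a x\<bar> \<le> geg_weight a x" if "x \<in> {-1<..<1}" for x :: real
  proof -
    have "\<bar>x\<bar> ^ k \<le> 1" using that by (intro power_le_one) auto
    then show ?thesis
      using geg_weight_nonneg[of a x] mult_right_mono[of "\<bar>x\<bar> ^ k" 1 "geg_weight a x"]
      by (simp add: abs_mult power_abs)
  qed
  then show "AE x in lborel. norm (indicator {-1<..<1::real} x *\<^sub>R (x ^ k * geg_weight a x))
      \<le> norm (indicator {-1<..<1::real} x *\<^sub>R geg_weight a x)"
    by (intro AE_I2) (simp add: indicator_def geg_weight_nonneg)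
qed measurable

lemma set_integral_odd_eq_0:
  fixes f :: "real \<Rightarrow> real"
  assumes "\<And>x. f (- x) = - f x"
  shows "(LINT x:{-r<..<r}|lborel. f x) = 0"
proof -
  define g where "g x = indicator {-r<..<r} x *\<^sub>R f x" for x
  have "integral\<^sup>L lborel g = \<bar>-1\<bar> *\<^sub>R integral\<^sup>L lborel (\<lambda>x. g (0 + (-1) * x))"
    by (rule lborel_integral_real_affine) simp
  also have "(\<lambda>x. g (0 + (-1) * x)) = (\<lambda>x. - g x)"
    using assms by (intro ext) (auto simp: g_def indicator_def)
  finally show ?thesis
    by (simp add: set_lebesgue_integral_def g_def)
qed

lemma set_integral_even:
  fixes f :: "real \<Rightarrow> real"
  assumes f: "set_integrable lborel {-r<..<r} f" and [measurable]: "f \<in> borel_measurable borel"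
    and even: "\<And>x. f (- x) = f x"
  shows "(LINT x:{-r<..<r}|lborel. f x) = 2 * (LINT x:{0..r}|lborel. f x)"
proof -
  have ae: "AE x in lborel. (x \<in> A) = (x \<in> B)"
    if "A - {0, r} = B - {0, r}" for A B :: "real set"
    using AE_lborel_singleton[of 0] AE_lborel_singleton[of r]
    by eventually_elim (use that in blast)
  have neg: "(LINT x:{-r<..<0}|lborel. f x) = (LINT x:{0<..<r}|lborel. f x)"
  proof -
    define g where "g x = indicator {-r<..<0} x *\<^sub>R f x" for x
    have "integral\<^sup>L lborel g = \<bar>-1\<bar> *\<^sub>R integral\<^sup>L lborel (\<lambda>x. g (0 + (-1) * x))"
      by (rule lborel_integral_real_affine) simp
    also have "(\<lambda>x. g (0 + (-1) * x)) = (\<lambda>x. indicator {0<..<r} x *\<^sub>R f x)"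
      using even by (auto simp: g_def indicator_def)
    finally show ?thesis by (simp add: set_lebesgue_integral_def g_def)
  qed
  have "(LINT x:{-r<..<r}|lborel. f x) = (LINT x:{-r<..<0}|lborel. f x) + (LINT x:{0..<r}|lborel. f x)"
  proof (cases "r > 0")
    case True
    then have "{-r<..<r} = {-r<..<0} \<union> {0..<r}" by auto
    moreover have "set_integrable lborel {-r<..<0} f" "set_integrable lborel {0..<r} f"
      by (rule set_integrable_subset[OF f]; auto)+
    moreover have "{-r<..<0} \<inter> {0..<r} = {}" by auto
    ultimately show ?thesis by (simp add: set_integral_Un)
  qed (simp add: set_lebesgue_integral_def)
  also have "(LINT x:{0<..<r}|lborel. f x) = (LINT x:{0..r}|lborel. f x)"
    by (rule set_integral_cong_set, unfold set_borel_measurable_def, measurable, measurable)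
       (rule ae, auto)
  moreover have "(LINT x:{0..<r}|lborel. f x) = (LINT x:{0..r}|lborel. f x)"
    by (rule set_integral_cong_set, unfold set_borel_measurable_def, measurable, measurable)
       (rule ae, auto)
  ultimately show ?thesis using neg by simp
qed

lemma power2_powr_half_integer:
  fixes x :: real
  assumes "x > 0"
  shows "(x\<^sup>2) powr (real m + 1/2 - 1) * x = x ^ (2*m)"
proof -
  have "(x\<^sup>2) powr (real m + 1/2 - 1) * x = (x powr 2) powr (real m - 1/2) * x powr 1"
    using assms by (simp add: powr_realpow)
  also have "\<dots> = x powr (2 * (real m - 1/2) + 1)"
    by (simp only: powr_powr powr_add)
  also have "\<dots> = x ^ (2*m)"
    using assms by (simp add: powr_realpow[symmetric] algebra_simps)
  finally show ?thesis .
qed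

lemma set_integral_even_power_geg_weight:
  assumes a: "a > -1"
  shows "(LINT x:{0..1}|lborel. x ^ (2*m) * geg_weight a x) = Beta (real m + 1/2) (a + 1) / 2"
proof -
  define f where "f t = t powr (real m + 1/2 - 1) * (1 - t) powr (a + 1 - 1)" for t :: real
  have f: "set_integrable lborel {0..1::real} f"
    unfolding f_def by (rule integrable_Beta) (use a in auto)
  have "(LBINT x. f x * indicator {(0::real)\<^sup>2..1\<^sup>2} x) = (LBINT x. f (x\<^sup>2) * (2*x) * indicator {0..1} x)"
    by (rule integral_substitution(2)[where g = "\<lambda>x. x\<^sup>2" and g' = "\<lambda>x. 2*x"])
       (use f in \<open>auto intro!: derivative_eq_intros continuous_intros\<close>)
  moreover have "(LBINT x. f x * indicator {(0::real)\<^sup>2..1\<^sup>2} x) = Beta (real m + 1/2) (a + 1)"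
  proof -
    have "(LBINT x. f x * indicator {(0::real)\<^sup>2..1\<^sup>2} x) = integral {0..1} f"
      using set_borel_integral_eq_integral(2)[OF f] by (simp add: set_lebesgue_integral_def mult.commute)
    also have "\<dots> = Beta (real m + 1/2) (a + 1)"
      unfolding f_def by (rule integral_unique, rule has_integral_Beta_real) (use a in auto)
    finally show ?thesis .
  qed
  moreover have "(LBINT x. f (x\<^sup>2) * (2*x) * indicator {0..1} x)
      = (LBINT x. 2 * (indicator {0..1::real} x *\<^sub>R (x ^ (2*m) * geg_weight a x)))"
  proof (rule integral_cong_AE)
    show "AE x in lborel. f (x\<^sup>2) * (2*x) * indicator {0..1} x
        = 2 * (indicator {0..1::real} x *\<^sub>R (x ^ (2*m) * geg_weight a x))"
    proof (rule eventually_mono[OF AE_lborel_singleton[of 0]])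
      fix x :: real
      assume "x \<noteq> 0"
      with power2_powr_half_integer[of x m] show "f (x\<^sup>2) * (2*x) * indicator {0..1} x
          = 2 * (indicator {0..1::real} x *\<^sub>R (x ^ (2*m) * geg_weight a x))"
        by (cases "x \<in> {0..1}") (auto simp: f_def geg_weight_def mult_ac)
    qed
  qed (unfold f_def, measurable)
  ultimately show ?thesis
    by (simp add: set_lebesgue_integral_def)
qed

lemma set_integral_power_geg_weight:
  assumes a: "a > -1" and w: "set_integrable lborel {-1<..<1::real} (geg_weight a)"
  shows "(LINT x:{-1<..<1}|lborel. x ^ k * geg_weight a x) = geg_moment a k"
proof (cases "even k")
  case True
  then obtain m where k: "k = 2*m" by blast
  have "(LINT x:{-1<..<1}|lborel. x ^ k * geg_weight a x) = 2 * (LINT x:{0..1}|lborel. x ^ k * geg_weight a x)"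
    using set_integrable_power_geg_weight[OF w] True by (intro set_integral_even) auto
  then show ?thesis
    by (simp add: k geg_moment_def set_integral_even_power_geg_weight[OF a])
next
  case False
  then show ?thesis
    using set_integral_odd_eq_0[of "\<lambda>x. x ^ k * geg_weight a x" 1] by (simp add: geg_moment_def)
qed

lemma set_integral_poly_geg_weight:
  assumes a: "a > -1" and w: "set_integrable lborel {-1<..<1::real} (geg_weight a)"
  shows "(LINT x:{-1<..<1}|lborel. poly p x * geg_weight a x) = geg_integral a p"
proof -
  have "(LINT x:{-1<..<1}|lborel. poly p x * geg_weight a x)
      = (LBINT x. \<Sum>i\<le>degree p. coeff p i * (indicator {-1<..<1::real} x *\<^sub>R (x ^ i * geg_weight a x)))"
    unfolding set_lebesgue_integral_def poly_altdef
    by (intro Bochner_Integration.integral_cong refl) (simp add: sum_distrib_left sum_distrib_right mult_ac)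
  also have "\<dots> = (\<Sum>i\<le>degree p. coeff p i * (LINT x:{-1<..<1}|lborel. x ^ i * geg_weight a x))"
    using set_integrable_power_geg_weight[OF w]
    unfolding set_lebesgue_integral_def set_integrable_def
    by (subst Bochner_Integration.integral_sum) auto
  also have "\<dots> = geg_integral a p"
    by (simp add: geg_integral_def set_integral_power_geg_weight[OF a w])
  finally show ?thesis .
qed

section \<open>Monic orthogonal polynomials\<close>

lemma geg_integral_mult_eq_0_if_orth_monoms:
  assumes "\<forall>k<n. geg_integral a (monom 1 k * P) = 0" and "\<forall>k\<ge>n. coeff r k = 0"
  shows "geg_integral a (r * P) = 0"
proof -
  have "r = (\<Sum>i<n. monom (coeff r i) i)"
    using assms(2) by (intro poly_eqI) (auto simp: coeff_sum coeff_monom sum.delta')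
  then have "r * P = (\<Sum>i<n. monom (coeff r i) i) * P"
    by (rule arg_cong)
  also have "\<dots> = (\<Sum>i<n. smult (coeff r i) (monom 1 i * P))"
    by (simp add: sum_distrib_right smult_monom_mult)
  finally show ?thesis using assms(1)
    by (simp add: geg_integral_sum)
qed

lemma coeff_geg_op_minus_eigen:
  assumes "degree P \<le> n" "n \<le> k"
  shows "coeff (geg_op a P - smult (geg_lambda a n) P) k = 0"
  using assms by (cases "k = n") (auto simp: coeff_geg_op coeff_eq_0)

lemma coeff_geg_op_eq_0:
  assumes "degree P < n" "n \<le> k"
  shows "coeff (geg_op a P) k = 0"
  using assms by (simp add: coeff_geg_op coeff_eq_0)

lemma geg_integral_pderiv_orth_monoms:
  assumes "a > -1" and "degree P = Suc m" and orth: "\<forall>k<Suc m. geg_integral a (monom 1 k * P) = 0"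
  shows "\<forall>k<m. geg_integral (a + 1) (monom 1 k * pderiv P) = 0"
proof (intro allI impI)
  fix k
  assume "k < m"
  have "pderiv (monom 1 (Suc k)) = smult (real k + 1) (monom 1 k)"
    by (simp add: pderiv_monom smult_monom)
  then have "monom 1 k * pderiv P = smult (1 / (real k + 1)) (pderiv (monom 1 (Suc k)) * pderiv P)"
    by (simp add: mult_smult_left)
  moreover have "\<forall>j\<ge>Suc m. coeff (geg_op a (monom 1 (Suc k))) j = 0"
    using \<open>k < m\<close> by (auto intro: coeff_geg_op_eq_0 simp: degree_monom_eq)
  with orth have "geg_integral a (geg_op a (monom 1 (Suc k)) * P) = 0"
    by (rule geg_integral_mult_eq_0_if_orth_monoms)
  ultimately show "geg_integral (a + 1) (monom 1 k * pderiv P) = 0"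
    by (simp add: geg_integral_geg_op_mult[OF assms(1)])
qed

lemma geg_integral_geg_op_mult_self:
  assumes "degree P = n" and orth: "\<forall>k<n. geg_integral a (monom 1 k * P) = 0"
  shows "geg_integral a (geg_op a P * P) = geg_lambda a n * geg_integral a (P * P)"
proof -
  have "\<forall>j\<ge>n. coeff (geg_op a P - smult (geg_lambda a n) P) j = 0"
    using assms(1) coeff_geg_op_minus_eigen[of P n] by (metis order_refl)
  with orth have "geg_integral a ((geg_op a P - smult (geg_lambda a n) P) * P) = 0"
    by (rule geg_integral_mult_eq_0_if_orth_monoms)
  then show ?thesis
    by (simp add: left_diff_distrib mult_smult_left)
qed

lemma geg_integral_monic_orth_square:
  assumes "a > -1" "degree P = n" "coeff P n = 1" "\<forall>k<n. geg_integral a (monom 1 k * P) = 0"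
  shows "geg_integral a (P * P) = fact n / pochhammer (real n + 2*a + 1) n * geg_moment (a + real n) 0"
  using assms
proof (induction n arbitrary: a P)
  case 0
  then have "P = 1" by (metis degree_0_id one_pCons)
  then show ?case by (simp add: geg_integral_def)
next
  case (Suc m)
  define Q where "Q = smult (1 / (real m + 1)) (pderiv P)"
  have "degree Q = m" "coeff Q m = 1"
    using Suc.prems(2,3) by (simp_all add: Q_def degree_pderiv coeff_pderiv)
  moreover have "\<forall>k<m. geg_integral (a + 1) (monom 1 k * Q) = 0"
    using geg_integral_pderiv_orth_monoms[OF Suc.prems(1,2,4)] by (simp add: Q_def mult_smult_right)
  ultimately have IH: "geg_integral (a + 1) (Q * Q)
      = fact m / pochhammer (real m + 2*(a + 1) + 1) m * geg_moment (a + 1 + real m) 0"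
    using Suc.IH[of "a + 1" Q] Suc.prems(1) by auto
  have lambda: "geg_lambda a (Suc m) = (real m + 1) * (real m + 2*a + 2)" "real m + 2*a + 2 > 0"
    using Suc.prems(1) by (simp_all add: geg_lambda_def power2_eq_square algebra_simps)
  have "geg_lambda a (Suc m) * geg_integral a (P * P) = (real m + 1)\<^sup>2 * geg_integral (a + 1) (Q * Q)"
    unfolding geg_integral_geg_op_mult_self[OF Suc.prems(2,4), symmetric] geg_integral_geg_op_mult[OF Suc.prems(1)]
    by (simp add: Q_def mult_smult_left mult_smult_right power2_eq_square)
  moreover have "geg_lambda a (Suc m) \<noteq> 0"
    using lambda by simp
  ultimately have "geg_integral a (P * P) = (real m + 1)\<^sup>2 / geg_lambda a (Suc m) * geg_integral (a + 1) (Q * Q)"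
    by (simp add: field_simps)
  also have "(real m + 1)\<^sup>2 / geg_lambda a (Suc m) = (real m + 1) / (real m + 2*a + 2)"
    unfolding lambda(1) power2_eq_square by (rule mult_divide_mult_cancel_left) simp
  also have "\<dots> * geg_integral (a + 1) (Q * Q)
      = fact (Suc m) / ((real m + 2*a + 2) * pochhammer (real m + 2*(a + 1) + 1) m) * geg_moment (a + real (Suc m)) 0"
    unfolding IH by (simp add: add_ac)
  also have "(real m + 2*a + 2) * pochhammer (real m + 2*(a + 1) + 1) m = pochhammer (real (Suc m) + 2*a + 1) (Suc m)"
    by (simp add: pochhammer_rec algebra_simps)
  finally show ?case .
qed

section \<open>Gamma function\<close>

lemma Gamma_legendre_duplication_real:
  fixes x :: real
  assumes "x > 0"
  shows "Gamma x * Gamma (x + 1/2) = 2 powr (1 - 2*x) * sqrt pi * Gamma (2*x)"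
proof -
  have "Gamma (complex_of_real x) * Gamma (complex_of_real x + 1/2)
      = exp ((1 - 2 * complex_of_real x) * of_real (ln 2)) * of_real (sqrt pi) * Gamma (2 * complex_of_real x)"
    using assms by (intro Gamma_legendre_duplication) (auto simp: nonpos_Ints_def complex_eq_iff)
  also have "complex_of_real x + 1/2 = of_real (x + 1/2)" by simp
  also have "(1 - 2 * complex_of_real x) * of_real (ln 2) = of_real ((1 - 2 * x) * ln 2)" by simp
  also have "2 * complex_of_real x = of_real (2 * x)" by simp
  finally have "complex_of_real (Gamma x * Gamma (x + 1/2)) = of_real (exp ((1 - 2*x) * ln 2) * sqrt pi * Gamma (2*x))"
    by (simp only: Gamma_complex_of_real exp_of_real flip: of_real_mult)
  then show ?thesis
    by (simp only: of_real_eq_iff) (simp add: powr_def)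
qed

text \<open>For \<open>z > 0\<close> this is Gauss's product for \<open>\<Gamma>(z)\<close>; the functional equation extends it
  to all real \<open>z\<close>.\<close>
lemma Gamma_plus_over_fact_LIMSEQ_pos:
  fixes z :: real
  assumes "z > 0"
  shows "(\<lambda>m. Gamma (real m + 1 + z) / (fact m * real m powr z)) \<longlonglongrightarrow> 1"
proof -
  have "Gamma z > 0"
    using assms by simp
  then have "(\<lambda>m. Gamma z / Gamma_series z m) \<longlonglongrightarrow> Gamma z / Gamma z"
    by (intro tendsto_intros Gamma_series_LIMSEQ) auto
  moreover have "eventually (\<lambda>m. Gamma z / Gamma_series z m = Gamma (real m + 1 + z) / (fact m * real m powr z)) sequentially"
    using eventually_gt_at_top[of "0::nat"]
  proof eventually_elim
    case (elim m)
    have "pochhammer z (m + 1) = Gamma (z + real (m + 1)) / Gamma z"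
      using assms by (intro pochhammer_Gamma pos_not_in_nonpos_Ints) simp
    with elim \<open>Gamma z > 0\<close> show ?case
      by (simp add: Gamma_series_def powr_def field_simps add_ac)
  qed
  ultimately show ?thesis
    using \<open>Gamma z > 0\<close> by (simp add: Lim_transform_eventually)
qed

lemma Gamma_plus_over_fact_LIMSEQ_step:
  fixes z :: real
  assumes "(\<lambda>m. Gamma (real m + 1 + (z + 1)) / (fact m * real m powr (z + 1))) \<longlonglongrightarrow> 1"
  shows "(\<lambda>m. Gamma (real m + 1 + z) / (fact m * real m powr z)) \<longlonglongrightarrow> 1"
proof -
  have "(\<lambda>m. Gamma (real m + 1 + (z + 1)) / (fact m * real m powr (z + 1)) * (real m / (real m + 1 + z)))
      \<longlonglongrightarrow> 1 * 1"
    by (intro tendsto_mult assms) real_asymp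
  moreover have "eventually (\<lambda>m. Gamma (real m + 1 + (z + 1)) / (fact m * real m powr (z + 1)) * (real m / (real m + 1 + z))
      = Gamma (real m + 1 + z) / (fact m * real m powr z)) sequentially"
    using eventually_gt_at_top[of "nat \<lceil>\<bar>z\<bar>\<rceil>"]
  proof eventually_elim
    case (elim m)
    then have "real m + 1 + z > 0" by linarith
    moreover have "Gamma (real m + 1 + (z + 1)) = (real m + 1 + z) * Gamma (real m + 1 + z)"
      using Gamma_plus1[OF pos_not_in_nonpos_Ints[OF \<open>real m + 1 + z > 0\<close>]] by (simp add: add_ac)
    moreover have "real m powr (z + 1) = real m powr z * real m"
      using elim by (simp add: powr_add)
    ultimately show ?case
      using elim by (simp add: divide_simps)
  qed
  ultimately show ?thesis
    by (simp add: Lim_transform_eventually)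
qed

lemma Gamma_plus_over_fact_LIMSEQ:
  fixes z :: real
  shows "(\<lambda>m. Gamma (real m + 1 + z) / (fact m * real m powr z)) \<longlonglongrightarrow> 1"
proof -
  have "(\<lambda>m. Gamma (real m + 1 + z) / (fact m * real m powr z)) \<longlonglongrightarrow> 1" if "real k + z > 0" for k
    using that
  proof (induction k arbitrary: z)
    case 0
    then show ?case by (intro Gamma_plus_over_fact_LIMSEQ_pos) simp
  next
    case (Suc k)
    then have "(\<lambda>m. Gamma (real m + 1 + (z + 1)) / (fact m * real m powr (z + 1))) \<longlonglongrightarrow> 1"
      by (intro Suc.IH) simp
    then show ?case by (rule Gamma_plus_over_fact_LIMSEQ_step)
  qed
  moreover obtain k :: nat where "real k > - z"
    using reals_Archimedean2 by blast
  then have "real k + z > 0"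
    by linarith
  ultimately show ?thesis
    by blast
qed

lemma geg_monic_norm_Gamma:
  assumes a: "a > -1" and n: "n \<ge> 1"
  shows "fact n / pochhammer (real n + 2*a + 1) n * geg_moment (a + real n) 0
         = pi / (4^n * 2 powr (2*a)) * fact n * Gamma (real n + 2*a + 1)
           / ((real n + a + 1/2) * (Gamma (real n + a + 1/2))\<^sup>2)"
proof -
  define b where "b = a + 1/2"
  have pos: "real n + b > 0" "real n + 2*b > 0"
    using a n by (auto simp: b_def)
  have p: "pochhammer (real n + 2*a + 1) n = Gamma (2 * (real n + b)) / Gamma (real n + 2*b)"
    using pochhammer_Gamma[OF pos_not_in_nonpos_Ints[OF pos(2)], of n] by (simp add: b_def algebra_simps)
  have m: "geg_moment (a + real n) 0 = sqrt pi * Gamma (real n + b + 1/2) / ((real n + b) * Gamma (real n + b))"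
  proof -
    have "geg_moment (a + real n) 0 = Gamma (1/2) * Gamma (real n + b + 1/2) / Gamma (real n + b + 1)"
      by (simp add: geg_moment_def Beta_def b_def algebra_simps)
    also have "Gamma (real n + b + 1) = (real n + b) * Gamma (real n + b)"
      using pos_not_in_nonpos_Ints[OF pos(1)] by (rule Gamma_plus1)
    finally show ?thesis
      by (simp add: Gamma_one_half_real)
  qed
  have d: "Gamma (real n + b + 1/2)
      = 2 powr (1 - 2 * (real n + b)) * sqrt pi * Gamma (2 * (real n + b)) / Gamma (real n + b)"
    using Gamma_legendre_duplication_real[OF pos(1)] Gamma_real_pos[OF pos(1)] by (simp add: field_simps)
  have "2 powr (2 * (real n + b) - 1) = 2 powr real (2*n) * 2 powr (2*a)"
    by (simp add: b_def powr_add[symmetric] algebra_simps)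
  also have "2 powr real (2*n) = (2::real) ^ (2*n)"
    by (rule powr_realpow) simp
  also have "(2::real) ^ (2*n) = 4 ^ n"
    by (simp add: power_mult)
  finally have "2 powr (2 * (real n + b) - 1) = 4^n * 2 powr (2*a)"
    by simp
  moreover have "2 powr (1 - 2 * (real n + b)) = 1 / 2 powr (2 * (real n + b) - 1)"
    by (simp add: powr_minus_divide[symmetric])
  ultimately have pw: "2 powr (1 - 2 * (real n + b)) = 1 / (4^n * 2 powr (2*a))"
    by simp
  have field_identity: "F / (G2 / G1) * (sqrt pi * (P * sqrt pi * G2 / G) / (N * G)) = pi * P * F * G1 / (N * G\<^sup>2)"
    if "G > 0" "G1 > 0" "G2 > 0" for F G G1 G2 P N :: real
    using that by (simp add: field_simps power2_eq_square)
  have "fact n / pochhammer (real n + 2*a + 1) n * geg_moment (a + real n) 0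
      = fact n / (Gamma (2 * (real n + b)) / Gamma (real n + 2*b))
        * (sqrt pi * (1 / (4^n * 2 powr (2*a)) * sqrt pi * Gamma (2 * (real n + b)) / Gamma (real n + b))
           / ((real n + b) * Gamma (real n + b)))"
    by (simp only: p m d pw)
  also have "\<dots> = pi * (1 / (4^n * 2 powr (2*a))) * fact n * Gamma (real n + 2*b) / ((real n + b) * (Gamma (real n + b))\<^sup>2)"
    using pos by (intro field_identity) simp_all
  finally show ?thesis
    by (simp add: b_def add_ac)
qed

section \<open>The Stolz--Cesaro theorem\<close>

lemma abs_diff_le_of_increments:
  fixes D B :: "nat \<Rightarrow> real"
  assumes "\<And>n. n \<ge> N \<Longrightarrow> \<bar>D (Suc n) - D n\<bar> \<le> e * (B (Suc n) - B n)" and "N \<le> n"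
  shows "\<bar>D n - D N\<bar> \<le> e * (B n - B N)"
  using assms(2)
proof (induction rule: dec_induct)
  case (step n)
  have "\<bar>D (Suc n) - D N\<bar> \<le> \<bar>D (Suc n) - D n\<bar> + \<bar>D n - D N\<bar>"
    by arith
  also have "\<dots> \<le> e * (B (Suc n) - B n) + e * (B n - B N)"
    using assms(1)[of n] step by simp
  also have "\<dots> = e * (B (Suc n) - B N)"
    by (simp flip: distrib_left)
  finally show ?case .
qed simp

lemma stolz_cesaro_0:
  fixes D B :: "nat \<Rightarrow> real"
  assumes mono: "\<And>n. B n < B (Suc n)" and B: "filterlim B at_top sequentially"
    and lim: "(\<lambda>n. (D (Suc n) - D n) / (B (Suc n) - B n)) \<longlonglongrightarrow> 0"
  shows "(\<lambda>n. D n / B n) \<longlonglongrightarrow> 0"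
proof (rule LIMSEQ_I)
  fix e :: real
  assume e: "e > 0"
  obtain N where N: "\<And>n. n \<ge> N \<Longrightarrow> \<bar>D (Suc n) - D n\<bar> \<le> e/2 * (B (Suc n) - B n)"
  proof -
    obtain N where "\<forall>n\<ge>N. \<bar>(D (Suc n) - D n) / (B (Suc n) - B n)\<bar> < e/2"
      using LIMSEQ_D[OF lim, of "e/2"] e by auto
    with mono show ?thesis
      by (intro that) (auto simp: abs_div less_imp_le divide_less_eq)
  qed
  define K where "K = 2 * (\<bar>D N\<bar> + e/2 * \<bar>B N\<bar>) / e"
  obtain M where M: "\<And>n. n \<ge> M \<Longrightarrow> B n > max K 0"
    using B unfolding filterlim_at_top_dense eventually_sequentially by blast
  have "\<bar>D n / B n\<bar> < e" if "n \<ge> max N M" for n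
  proof -
    have Bn: "B n > K" "B n > 0" using M[of n] that by auto
    have "N \<le> n" using that by simp
    with N have "\<bar>D n - D N\<bar> \<le> e/2 * (B n - B N)"
      by (rule abs_diff_le_of_increments)
    then have "\<bar>D n\<bar> \<le> \<bar>D N\<bar> + e/2 * (B n - B N)"
      by linarith
    also have "\<dots> \<le> e/2 * K + e/2 * B n"
    proof -
      have "e/2 * K = \<bar>D N\<bar> + e/2 * \<bar>B N\<bar>"
        using e by (simp add: K_def)
      moreover have "- (e/2 * B N) \<le> e/2 * \<bar>B N\<bar>"
        using e by (simp add: abs_if)
      ultimately show ?thesis
        unfolding right_diff_distrib by linarith
    qed
    also have "\<dots> < e/2 * B n + e/2 * B n"
      using Bn e by (intro add_strict_right_mono mult_strict_left_mono) auto
    also have "\<dots> = e * B n"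
      by simp
    finally show ?thesis
      using Bn by (simp add: abs_div divide_less_eq)
  qed
  then show "\<exists>no. \<forall>n\<ge>no. norm (D n / B n - 0) < e"
    by (intro exI[of _ "max N M"]) simp
qed

theorem stolz_cesaro:
  fixes A B :: "nat \<Rightarrow> real"
  assumes mono: "\<And>n. B n < B (Suc n)" and B: "filterlim B at_top sequentially"
    and lim: "(\<lambda>n. (A (Suc n) - A n) / (B (Suc n) - B n)) \<longlonglongrightarrow> L"
  shows "(\<lambda>n. A n / B n) \<longlonglongrightarrow> L"
proof -
  define D where "D n = A n - L * B n" for n
  have "(\<lambda>n. (A (Suc n) - A n) / (B (Suc n) - B n) - L) \<longlonglongrightarrow> L - L"
    by (intro tendsto_intros lim)
  moreover have "(A (Suc n) - A n) / (B (Suc n) - B n) - L = (D (Suc n) - D n) / (B (Suc n) - B n)" for n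
    using mono[of n] by (simp add: D_def field_simps)
  ultimately have "(\<lambda>n. (D (Suc n) - D n) / (B (Suc n) - B n)) \<longlonglongrightarrow> 0"
    by simp
  then have "(\<lambda>n. D n / B n + L) \<longlonglongrightarrow> 0 + L"
    by (intro tendsto_intros stolz_cesaro_0[OF mono B])
  moreover have "eventually (\<lambda>n. D n / B n + L = A n / B n) sequentially"
    using B unfolding filterlim_at_top_dense
    by (rule allE[where x = 0]) (auto elim!: eventually_mono simp: D_def field_simps)
  ultimately show ?thesis
    by (simp add: Lim_transform_eventually)
qed

lemma LIMSEQ_div_power_Suc_of_differences:
  fixes A :: "nat \<Rightarrow> real"
  assumes "(\<lambda>n. (A (Suc n) - A n) / real n ^ p) \<longlonglongrightarrow> C"
  shows "(\<lambda>n. A n / real n ^ Suc p) \<longlonglongrightarrow> C / real (Suc p)"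
proof (rule stolz_cesaro)
  show "real n ^ Suc p < real (Suc n) ^ Suc p" for n
    by (intro power_strict_mono) auto
  show "filterlim (\<lambda>n. real n ^ Suc p) at_top sequentially"
    by (intro filterlim_pow_at_top filterlim_real_sequentially) simp
  have "(\<lambda>n. real n ^ p / (real (Suc n) ^ Suc p - real n ^ Suc p)) \<longlonglongrightarrow> inverse (1 + real p)"
    by real_asymp
  from tendsto_mult[OF assms this]
  have "(\<lambda>n. (A (Suc n) - A n) / real n ^ p * (real n ^ p / (real (Suc n) ^ Suc p - real n ^ Suc p)))
      \<longlonglongrightarrow> C / real (Suc p)"
    by (simp add: field_simps)
  moreover have "eventually (\<lambda>n. (A (Suc n) - A n) / real n ^ p * (real n ^ p / (real (Suc n) ^ Suc p - real n ^ Suc p))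
      = (A (Suc n) - A n) / (real (Suc n) ^ Suc p - real n ^ Suc p)) sequentially"
    using eventually_gt_at_top[of "0::nat"] by eventually_elim simp
  ultimately show "(\<lambda>n. (A (Suc n) - A n) / (real (Suc n) ^ Suc p - real n ^ Suc p)) \<longlonglongrightarrow> C / real (Suc p)"
    by (rule Lim_transform_eventually)
qed

lemma LIMSEQ_div_power_of_weighted_sum:
  fixes S :: "nat \<Rightarrow> real"
  assumes S: "(\<lambda>i. S i / real i ^ p) \<longlonglongrightarrow> C"
  shows "(\<lambda>n. (\<Sum>i=1..n. (u * real i + v) * S i) / real n ^ Suc (Suc p)) \<longlonglongrightarrow> u * C / real (Suc (Suc p))"
proof -
  define A where "A n = (\<Sum>i=1..n. (u * real i + v) * S i)" for n
  have "(\<lambda>n. (u * real (Suc n) + v) / real n) \<longlonglongrightarrow> u"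
    by real_asymp
  moreover have ratio: "(\<lambda>n. real (Suc n) / real n) \<longlonglongrightarrow> 1"
    by real_asymp
  have "(\<lambda>n. (real (Suc n) / real n) ^ p) \<longlonglongrightarrow> 1"
    using tendsto_power[OF ratio, of p] by simp
  ultimately have "(\<lambda>n. (u * real (Suc n) + v) / real n * (S (Suc n) / real (Suc n) ^ p) * (real (Suc n) / real n) ^ p)
      \<longlonglongrightarrow> u * C * 1"
    by (intro tendsto_mult LIMSEQ_Suc[OF S])
  moreover have "eventually (\<lambda>n. (u * real (Suc n) + v) / real n * (S (Suc n) / real (Suc n) ^ p)
      * (real (Suc n) / real n) ^ p = (A (Suc n) - A n) / real n ^ Suc p) sequentially"
  proof (rule eventually_mono[OF eventually_gt_at_top[of "0::nat"]])
    fix n :: nat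
    assume "n > 0"
    moreover have "A (Suc n) - A n = (u * real (Suc n) + v) * S (Suc n)"
      by (simp add: A_def)
    ultimately show "(u * real (Suc n) + v) / real n * (S (Suc n) / real (Suc n) ^ p)
        * (real (Suc n) / real n) ^ p = (A (Suc n) - A n) / real n ^ Suc p"
      by (simp add: power_divide)
  qed
  ultimately have "(\<lambda>n. (A (Suc n) - A n) / real n ^ Suc p) \<longlonglongrightarrow> u * C"
    by (simp add: Lim_transform_eventually)
  then show ?thesis
    using LIMSEQ_div_power_Suc_of_differences[of A "Suc p"] by (simp add: A_def)
qed

section \<open>Orthonormal Gegenbauer polynomials\<close>

lemma poly_higher_pderiv_at_0: "poly ((pderiv ^^ j) p) 0 = fact j * coeff (p :: real poly) j"
  by (simp add: poly_0_coeff_0 coeff_higher_pderiv pochhammer_fact)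

locale gegenbauer_orthonormal =
  fixes a :: real and c :: "nat \<Rightarrow> real poly"
  assumes gt_minus_one: "a > -1"
    and orthonormal: "orthonormal_gegenbauer a c"
begin

lemma degree_c [simp]: "degree (c n) = n"
  using orthonormal by (simp add: orthonormal_gegenbauer_def)

lemma lead_coeff_c_pos: "lead_coeff (c n) > 0"
  using orthonormal by (simp add: orthonormal_gegenbauer_def)

lemma c_nonzero: "c n \<noteq> 0"
  using lead_coeff_c_pos[of n] by auto

lemma set_integrable_geg_weight: "set_integrable lborel {-1<..<1::real} (geg_weight a)"
proof -
  obtain \<gamma> where "c 0 = [:\<gamma>:]" "\<gamma> \<noteq> 0"
    using degree_c[of 0] c_nonzero[of 0] by (metis degree_0_id pCons_0_0)
  moreover have "set_integrable lborel {-1<..<1::real} (\<lambda>x. poly (c 0) x * poly (c 0) x * geg_weight a x)"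
    using orthonormal by (simp add: orthonormal_gegenbauer_def)
  ultimately show ?thesis
    by (simp add: set_integrable_mult_right_iff)
qed

lemma geg_integral_c_mult_c: "geg_integral a (c n * c m) = (if n = m then 1 else 0)"
  using orthonormal set_integral_poly_geg_weight[OF gt_minus_one set_integrable_geg_weight, of "c n * c m"]
  by (simp add: orthonormal_gegenbauer_def)

lemma expansion_in_c:
  assumes "\<forall>k\<ge>N. coeff q k = 0"
  shows "q = (\<Sum>i<N. smult (geg_integral a (q * c i)) (c i))"
  using assms
proof (induction N arbitrary: q)
  case 0
  then show ?case by (auto intro: poly_eqI)
next
  case (Suc N)
  define t where "t = coeff q N / lead_coeff (c N)"
  define q' where "q' = q - smult t (c N)"
  have "\<forall>k\<ge>N. coeff q' k = 0"
  proof (intro allI impI)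
    fix k assume "N \<le> k"
    then consider "k = N" | "k > N" by linarith
    then show "coeff q' k = 0"
      using Suc.prems lead_coeff_c_pos[of N] by cases (auto simp: q'_def t_def coeff_eq_0)
  qed
  then have IH: "q' = (\<Sum>i<N. smult (geg_integral a (q' * c i)) (c i))"
    by (rule Suc.IH)
  have q: "q = q' + smult t (c N)"
    by (simp add: q'_def)
  have "geg_integral a (q' * c N) = (\<Sum>i<N. geg_integral a (q' * c i) * geg_integral a (c i * c N))"
    by (subst IH) (simp add: sum_distrib_right mult_smult_left geg_integral_sum)
  then have "geg_integral a (q * c N) = t"
    by (simp add: q distrib_right mult_smult_left geg_integral_c_mult_c)
  moreover have "geg_integral a (q * c i) = geg_integral a (q' * c i)" if "i < N" for i
    using that by (simp add: q distrib_right mult_smult_left geg_integral_c_mult_c)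
  ultimately show ?case
    using IH q by simp
qed

lemma geg_integral_mult_c_eq_0:
  assumes "\<forall>k\<ge>n. coeff q k = 0"
  shows "geg_integral a (q * c n) = 0"
proof -
  have "geg_integral a (q * c n) = (\<Sum>i<n. geg_integral a (q * c i) * geg_integral a (c i * c n))"
    by (subst expansion_in_c[OF assms]) (simp add: sum_distrib_right mult_smult_left geg_integral_sum)
  then show ?thesis
    by (simp add: geg_integral_c_mult_c)
qed

lemma geg_op_c: "geg_op a (c n) = smult (geg_lambda a n) (c n)"
proof -
  define D where "D = geg_op a (c n) - smult (geg_lambda a n) (c n)"
  have D: "\<forall>k\<ge>n. coeff D k = 0"
    by (simp add: D_def coeff_geg_op_minus_eigen del: coeff_diff coeff_smult)
  have "geg_integral a (D * c i) = 0" if "i < n" for i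
  proof -
    have "geg_integral a (geg_op a (c n) * c i) = geg_integral a (geg_op a (c i) * c n)"
      using geg_integral_geg_op_mult[OF gt_minus_one, of "c n" "c i"]
        geg_integral_geg_op_mult[OF gt_minus_one, of "c i" "c n"]
      by (simp add: mult.commute)
    also have "\<dots> = 0"
      using that by (intro geg_integral_mult_c_eq_0 allI impI coeff_geg_op_eq_0) auto
    finally show ?thesis
      using that by (simp add: D_def left_diff_distrib mult_smult_left geg_integral_c_mult_c)
  qed
  then have "D = 0"
    by (subst expansion_in_c[OF D]) simp
  then show ?thesis
    by (simp add: D_def)
qed

lemma coeff_c_recurrence:
  "(geg_lambda a n - geg_lambda a k) * coeff (c n) k = - ((real k + 2) * (real k + 1)) * coeff (c n) (k + 2)"
  using arg_cong[OF geg_op_c[of n], of "\<lambda>p. coeff p k"] by (simp add: coeff_geg_op algebra_simps)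

lemma geg_lambda_diff_nonzero: "k < n \<Longrightarrow> geg_lambda a n - geg_lambda a k \<noteq> 0"
  using gt_minus_one by (simp add: geg_lambda_diff add_pos_pos)

lemma coeff_c_odd:
  assumes "k + 2*i + 1 = n"
  shows "coeff (c n) k = 0"
  using assms
proof (induction i arbitrary: k)
  case 0
  then have "coeff (c n) (k + 2) = 0" by (intro coeff_eq_0) auto
  with 0 show ?case
    using coeff_c_recurrence[of n k] geg_lambda_diff_nonzero[of k n] by simp
next
  case (Suc i)
  then have "coeff (c n) (k + 2) = 0" by (intro Suc.IH) simp
  with Suc.prems show ?case
    using coeff_c_recurrence[of n k] geg_lambda_diff_nonzero[of k n] by simp
qed

lemma coeff_c_even:
  assumes "k + 2*i = n"
  shows "coeff (c n) k = (-1)^i * fact n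
           / (fact k * 4^i * fact i * pochhammer (real k + real i + a + 1/2) i) * lead_coeff (c n)"
  using assms
proof (induction i arbitrary: k)
  case 0
  then show ?case by simp
next
  case (Suc i)
  define x where "x = real k + real (Suc i) + a + 1/2"
  have x: "x > 0"
    using gt_minus_one Suc.prems by (auto simp: x_def)
  have IH: "coeff (c n) (k + 2) = (-1)^i * fact n
      / (fact (k + 2) * 4^i * fact i * pochhammer (x + 1) i) * lead_coeff (c n)"
    using Suc.IH[of "k + 2"] Suc.prems by (simp add: x_def algebra_simps)
  have "real n = real k + 2 * real i + 2"
    using Suc.prems by simp
  then have "geg_lambda a n - geg_lambda a k = 4 * (real i + 1) * x"
    by (simp add: geg_lambda_diff x_def algebra_simps)
  with coeff_c_recurrence[of n k]
  have rec: "4 * (real i + 1) * x * coeff (c n) k = - ((real k + 2) * (real k + 1)) * coeff (c n) (k + 2)"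
    by simp
  have "coeff (c n) k = 4 * (real i + 1) * x * coeff (c n) k / (4 * (real i + 1) * x)"
    using x by simp
  also have "\<dots> = - ((real k + 2) * (real k + 1)) / (4 * (real i + 1) * x) * coeff (c n) (k + 2)"
    unfolding rec by simp
  also have "\<dots> = (-1)^Suc i * fact n / (fact k * 4^Suc i * fact (Suc i) * pochhammer x (Suc i)) * lead_coeff (c n)"
  proof -
    have "fact (k + 2) = (real k + 2) * (real k + 1) * (fact k :: real)"
      by (simp add: algebra_simps)
    moreover have "fact (Suc i) = (real i + 1) * (fact i :: real)"
      by simp
    moreover have "pochhammer x (Suc i) = x * pochhammer (x + 1) i"
      by (simp add: pochhammer_rec)
    moreover have "pochhammer (x + 1) i > 0"
      using x by (intro pochhammer_pos) simp
    ultimately show ?thesis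
      unfolding IH using x by (simp only: power_Suc) (simp add: divide_simps)
  qed
  finally show ?case by (simp add: x_def)
qed

lemma lead_coeff_c_square:
  "(lead_coeff (c n))\<^sup>2 * (fact n / pochhammer (real n + 2*a + 1) n * geg_moment (a + real n) 0) = 1"
proof -
  define l where "l = lead_coeff (c n)"
  have l: "l > 0" using lead_coeff_c_pos[of n] by (simp add: l_def)
  define P where "P = smult (1 / l) (c n)"
  have "geg_integral a (monom 1 k * c n) = 0" if "k < n" for k
    using that by (intro geg_integral_mult_c_eq_0) (auto simp: coeff_monom)
  then have "\<forall>k<n. geg_integral a (monom 1 k * P) = 0"
    by (simp add: P_def mult_smult_right)
  moreover have "degree P = n" "coeff P n = 1"
    using l by (simp_all add: P_def l_def)
  ultimately have "geg_integral a (P * P) = fact n / pochhammer (real n + 2*a + 1) n * geg_moment (a + real n) 0"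
    by (intro geg_integral_monic_orth_square gt_minus_one)
  moreover have "geg_integral a (P * P) = 1 / l\<^sup>2"
    by (simp add: P_def mult_smult_left mult_smult_right geg_integral_c_mult_c power2_eq_square)
  ultimately have "fact n / pochhammer (real n + 2*a + 1) n * geg_moment (a + real n) 0 = 1 / l\<^sup>2"
    by simp
  then show ?thesis
    using l unfolding l_def[symmetric] by simp
qed

definition kernel_term :: "nat \<Rightarrow> nat \<Rightarrow> real" where
  "kernel_term j l = (poly ((pderiv ^^ j) (c (j + 2*l))) 0)\<^sup>2"

lemma kernelK_eq_sum_kernel_term:
  assumes "i \<ge> 1"
  shows "kernelK c j (j + 2*i - 1) = (\<Sum>l<i. kernel_term j l)"
proof -
  have "(\<Sum>m<j + 2*i. (poly ((pderiv ^^ j) (c m)) 0)\<^sup>2) = (\<Sum>l<i. kernel_term j l)" for i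
  proof (induction i)
    case 0
    have "coeff (c m) j = 0" if "m < j" for m
      using that by (intro coeff_eq_0) auto
    then show ?case by (simp add: poly_higher_pderiv_at_0)
  next
    case (Suc i)
    have "coeff (c (Suc (j + 2*i))) j = 0"
      by (rule coeff_c_odd[of j i]) simp
    moreover have "j + 2 * Suc i = Suc (Suc (j + 2*i))" by simp
    ultimately show ?case
      using Suc by (simp add: poly_higher_pderiv_at_0 kernel_term_def)
  qed
  moreover have "{0..j + 2*i - 1} = {..<j + 2*i}"
    using assms by auto
  ultimately show ?thesis
    by (simp add: kernelK_def)
qed

lemma kernel_term_eq:
  fixes j i :: nat
  defines "n \<equiv> j + 2*i"
  shows "kernel_term j i = (fact n)\<^sup>2 / (16^i * (fact i)\<^sup>2 * (pochhammer (real j + real i + a + 1/2) i)\<^sup>2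
           * (fact n / pochhammer (real n + 2*a + 1) n * geg_moment (a + real n) 0))"
proof -
  define N where "N = fact n / pochhammer (real n + 2*a + 1) n * geg_moment (a + real n) 0"
  have lcN: "(lead_coeff (c n))\<^sup>2 * N = 1"
    unfolding N_def by (rule lead_coeff_c_square)
  then have "N \<noteq> 0"
    by auto
  with lcN have lc: "(lead_coeff (c n))\<^sup>2 = 1 / N"
    by (simp add: field_simps)
  have ce: "coeff (c n) j = (-1)^i * fact n
      / (fact j * 4^i * fact i * pochhammer (real j + real i + a + 1/2) i) * lead_coeff (c n)"
    by (rule coeff_c_even) (simp add: n_def)
  have "(4::real) ^ (i * 2) = 16 ^ i"
    by (simp add: mult.commute[of i 2] power_mult)
  then have "kernel_term j i
      = (fact n)\<^sup>2 / (16^i * (fact i)\<^sup>2 * (pochhammer (real j + real i + a + 1/2) i)\<^sup>2) * (lead_coeff (c n))\<^sup>2"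
    unfolding kernel_term_def poly_higher_pderiv_at_0 n_def[symmetric] ce
    by (simp add: power_mult_distrib power_divide field_simps flip: power_mult)
  also have "\<dots> = (fact n)\<^sup>2 / (16^i * (fact i)\<^sup>2 * (pochhammer (real j + real i + a + 1/2) i)\<^sup>2 * N)"
    unfolding lc by simp
  finally show ?thesis
    by (simp only: N_def)
qed

lemma kernel_term_Gamma:
  fixes j i :: nat
  assumes i: "i \<ge> 1"
  defines "n \<equiv> j + 2*i"
  shows "kernel_term j i = 4^j * 2 powr (2*a) / pi * (real n + a + 1/2) * fact n
           * (Gamma (real j + real i + a + 1/2))\<^sup>2 / ((fact i)\<^sup>2 * Gamma (real n + 2*a + 1))"
proof -
  have pos: "real n + a + 1/2 > 0" "real j + real i + a + 1/2 > 0" "real n + 2*a + 1 > 0"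
    using gt_minus_one i by (auto simp: n_def)
  have p: "pochhammer (real j + real i + a + 1/2) i
      = Gamma (real n + a + 1/2) / Gamma (real j + real i + a + 1/2)"
    using pochhammer_Gamma[OF pos_not_in_nonpos_Ints[OF pos(2)], of i] by (simp add: n_def algebra_simps)
  have n: "n \<ge> 1" "(4::real) ^ n = 4^j * 16^i"
    using i by (simp_all add: n_def power_add power_mult)
  have field_identity: "F\<^sup>2 / (S * I\<^sup>2 * (G / G')\<^sup>2 * (pi / (A * S * Q) * F * G1 / (N * G\<^sup>2)))
      = A * Q / pi * N * F * G'\<^sup>2 / (I\<^sup>2 * G1)"
    if "F > 0" "S > 0" "I > 0" "G > 0" "G' > 0" "G1 > 0" "A > 0" "Q > 0" "N > 0" for F S I G G' G1 A Q N :: real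
    using that by (simp add: field_simps power2_eq_square)
  show ?thesis
    unfolding kernel_term_eq[of j i] n_def[symmetric] geg_monic_norm_Gamma[OF gt_minus_one n(1)] p n(2)
    using pos by (intro field_identity) simp_all
qed

lemma kernel_term_div_power_factorization:
  fixes j i :: nat
  assumes i: "i \<ge> 1"
  defines "n \<equiv> j + 2*i" and "z \<equiv> real j + a - 1/2"
  shows "kernel_term j i / real i ^ (2*j)
       = 4^j * 2 powr (2*a) / pi * (Gamma (real i + 1 + z) / (fact i * real i powr z))\<^sup>2
         / (Gamma (real n + 1 + 2*a) / (fact n * real n powr (2*a)))
         * ((real n + a + 1/2) / real i * (real i / real n) powr (2*a))"
proof -
  have pos: "real i > 0" "real n > 0" "Gamma (real n + 2*a + 1) > 0"
    using i gt_minus_one by (auto simp: n_def)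
  have "(real i powr z)\<^sup>2 * real i = real i powr (z + z + 1)"
    using pos by (simp only: power2_eq_square powr_add) simp
  also have "z + z + 1 = real (2*j) + 2*a"
    by (simp add: z_def)
  also have "real i powr (real (2*j) + 2*a) = real i ^ (2*j) * real i powr (2*a)"
    using powr_realpow[OF pos(1), of "2*j"] by (simp add: powr_add)
  finally have key: "(real i powr z)\<^sup>2 * real i = real i ^ (2*j) * real i powr (2*a)" .
  have field_identity:
    "K * (G / (I * P))\<^sup>2 / (H / (F * Q)) * (L / ii * (E / Q)) = K * L * F * G\<^sup>2 / (I\<^sup>2 * H) / X"
    if "P\<^sup>2 * ii = X * E" "I > 0" "P > 0" "H > 0" "F > 0" "Q > 0" "ii > 0" "E > 0"
    for K G I P H F Q L ii E X :: real
  proof -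
    have "X \<noteq> 0" using that by (metis mult_eq_0_iff power2_eq_square order_less_irrefl)
    with that show ?thesis
      by (simp add: field_simps power2_eq_square)
  qed
  have args: "real i + 1 + z = real j + real i + a + 1/2" "real n + 1 + 2*a = real n + 2*a + 1"
    by (simp_all add: z_def)
  show ?thesis
    unfolding args powr_divide kernel_term_Gamma[OF i, of j, folded n_def]
    using key pos by (intro field_identity[symmetric]) auto
qed

lemma kernel_term_asymptotics: "(\<lambda>i. kernel_term j i / real i ^ (2*j)) \<longlonglongrightarrow> 2 * 4^j / pi"
proof -
  define z where "z = real j + a - 1/2"
  define N where "N i = j + 2*i" for i
  define F where "F i = 4^j * 2 powr (2*a) / pi * (Gamma (real i + 1 + z) / (fact i * real i powr z))\<^sup>2
         / (Gamma (real (N i) + 1 + 2*a) / (fact (N i) * real (N i) powr (2*a)))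
         * ((real (N i) + a + 1/2) / real i * (real i / real (N i)) powr (2*a))" for i
  have G1: "(\<lambda>i. Gamma (real i + 1 + z) / (fact i * real i powr z)) \<longlonglongrightarrow> 1"
    by (rule Gamma_plus_over_fact_LIMSEQ)
  have "strict_mono N"
    by (auto simp: strict_mono_def N_def)
  then have G2: "(\<lambda>i. Gamma (real (N i) + 1 + 2*a) / (fact (N i) * real (N i) powr (2*a))) \<longlonglongrightarrow> 1"
    using LIMSEQ_subseq_LIMSEQ[OF Gamma_plus_over_fact_LIMSEQ[of "2*a"]] by (simp add: o_def)
  have R: "(\<lambda>i. (real (N i) + a + 1/2) / real i * (real i / real (N i)) powr (2*a))
      \<longlonglongrightarrow> 2 * (1/2) powr (2*a)"
    unfolding N_def by real_asymp
  have "4^j * 2 powr (2*a) / pi * 1\<^sup>2 / 1 * (2 * (1/2) powr (2*a)) = 2 * 4^j / pi"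
    by (simp add: powr_mult[symmetric])
  moreover have "F \<longlonglongrightarrow> 4^j * 2 powr (2*a) / pi * 1\<^sup>2 / 1 * (2 * (1/2) powr (2*a))"
    unfolding F_def
    by (rule tendsto_mult[OF tendsto_divide[OF tendsto_mult[OF tendsto_const tendsto_power[OF G1]] G2] R]) simp
  ultimately have "F \<longlonglongrightarrow> 2 * 4^j / pi"
    by (simp only:)
  moreover have "eventually (\<lambda>i. F i = kernel_term j i / real i ^ (2*j)) sequentially"
    using eventually_ge_at_top[of "1::nat"]
    by eventually_elim (simp add: F_def kernel_term_div_power_factorization N_def z_def)
  ultimately show ?thesis
    by (rule Lim_transform_eventually)
qed

lemma lambda_tilde_eq_kernel_term_sum:
  "lambda_tilde a M c j n = geg_lambda a (j + 2*n)
     + M * (\<Sum>i=1..n. (8 * real i + (4 * real j + 4 * a - 2)) * (\<Sum>l<i. kernel_term j l))"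
  unfolding lambda_tilde_def
proof (intro arg_cong2[where f = "\<lambda>x y. x + M * y"] sum.cong refl)
  fix i
  assume "i \<in> {1..n}"
  then have "i \<ge> 1" by simp
  then show "(geg_lambda a (j + 2*i) - geg_lambda a (j + 2*i - 2)) * kernelK c j (j + 2*i - 1)
      = (8 * real i + (4 * real j + 4 * a - 2)) * (\<Sum>l<i. kernel_term j l)"
    by (simp only: geg_lambda_step kernelK_eq_sum_kernel_term)
qed

lemma lambda_tilde_asymptotics:
  "(\<lambda>n. lambda_tilde a M c j n / real n ^ (2*j + 3))
     \<longlonglongrightarrow> 2^(2*j + 4) * M / (pi * (2 * real j + 1) * (2 * real j + 3))"
proof -
  define C where "C = 2 * 4^j / pi / real (Suc (2*j))"
  have "(\<lambda>i. (\<Sum>l<i. kernel_term j l) / real i ^ Suc (2*j)) \<longlonglongrightarrow> C"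
    unfolding C_def by (rule LIMSEQ_div_power_Suc_of_differences) (simp add: kernel_term_asymptotics)
  then have "(\<lambda>n. (\<Sum>i=1..n. (8 * real i + (4 * real j + 4 * a - 2)) * (\<Sum>l<i. kernel_term j l))
      / real n ^ (2*j + 3)) \<longlonglongrightarrow> 8 * C / real (2*j + 3)"
    unfolding numeral_3_eq_3 add_Suc_right add_0_right by (rule LIMSEQ_div_power_of_weighted_sum)
  then have "(\<lambda>n. lambda_tilde a M c j n / real n ^ (2*j + 3)) \<longlonglongrightarrow> 0 + M * (8 * C / real (2*j + 3))"
    unfolding lambda_tilde_eq_kernel_term_sum add_divide_distrib times_divide_eq_right[symmetric]
    by (intro tendsto_add geg_lambda_div_power_LIMSEQ tendsto_mult_left)
  moreover have "(2::real) ^ (2*j + 4) = 16 * 4^j"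
    by (simp add: power_add power_mult)
  ultimately show ?thesis
    by (simp add: C_def field_simps)
qed

end

theorem mainTheorem8:
  fixes \<alpha> M :: real and j r :: nat and c :: "nat \<Rightarrow> real poly"
  assumes "\<alpha> > -1" and "M > 0"
    and "orthonormal_gegenbauer \<alpha> c"
  shows "(j = 2*r \<longrightarrow>
            (\<lambda>n. lambda_tilde \<alpha> M c j n / real n ^ (4*r+3))
              \<longlonglongrightarrow> 2^(4*(r+1)) * M / (pi * (4*r+3) * (4*r+1)))
       \<and> (j = 2*r+1 \<longrightarrow>
            (\<lambda>n. lambda_tilde \<alpha> M c j n / real n ^ (4*r+5))
              \<longlonglongrightarrow> 2^(4*r+6) * M / (pi * (4*r+5) * (4*r+3)))"
proof -
  interpret gegenbauer_orthonormal \<alpha> c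
    using assms(1,3) by unfold_locales
  note lim = lambda_tilde_asymptotics[of M j]
  show ?thesis
  proof (intro conjI impI)
    assume "j = 2*r"
    then have "2*j + 3 = 4*r + 3" "2*j + 4 = 4*(r + 1)"
      "2 * real j + 1 = real (4*r + 1)" "2 * real j + 3 = real (4*r + 3)"
      by simp_all
    with lim show "(\<lambda>n. lambda_tilde \<alpha> M c j n / real n ^ (4*r+3))
        \<longlonglongrightarrow> 2^(4*(r+1)) * M / (pi * (4*r+3) * (4*r+1))"
      by (simp only: ac_simps)
  next
    assume "j = 2*r + 1"
    then have "2*j + 3 = 4*r + 5" "2*j + 4 = 4*r + 6"
      "2 * real j + 1 = real (4*r + 3)" "2 * real j + 3 = real (4*r + 5)"
      by simp_all
    with lim show "(\<lambda>n. lambda_tilde \<alpha> M c j n / real n ^ (4*r+5))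
        \<longlonglongrightarrow> 2^(4*r+6) * M / (pi * (4*r+5) * (4*r+3))"
      by (simp only: ac_simps)
  qed
qed

end
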